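(* Let $\nu\ne0$ be a positive measure on $[0,1]$ with moments $a_n=\int_0^1t^n\,d\nu(t)$, $n\ge0$. Then for every $\alpha>0$ the sequence $\big((a_0+a_1+\cdots+a_n)^{-\alpha}\big)_{n\ge0}$ is a Hausdorff moment sequence. In particular $\big(1/(a_0+\cdots+a_n)\big)_n$ is an infinitely divisible Hausdorff moment sequence.
   Context: A Hausdorff moment sequence is a sequence of the form $\big(\int_0^1t^n\,d\tau(t)\big)_{n\ge0}$ for a positive measure $\tau$ on $[0,1]$. A Hausdorff moment sequence $(b_n)$ is infinitely divisible if $(b_n^\alpha)_n$ is a Hausdorff moment sequence for every $\alpha>0$. *)

theory Defs
  imports "HOL-Analysis.Analysis"
begin

definition measure_on_unit_interval :: "real measure \<Rightarrow> bool" where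
  "measure_on_unit_interval M \<longleftrightarrow>
     sets M = sets (restrict_space borel {0..1::real}) \<and> finite_measure M"

definition moment :: "real measure \<Rightarrow> nat \<Rightarrow> real" where
  "moment M n = (\<integral>t. t ^ n \<partial>M)"

definition hausdorff_moment_seq :: "(nat \<Rightarrow> real) \<Rightarrow> bool" where
  "hausdorff_moment_seq b \<longleftrightarrow>
     (\<exists>M. measure_on_unit_interval M \<and> (\<forall>n. b n = moment M n))"

definition infinitely_divisible_hms :: "(nat \<Rightarrow> real) \<Rightarrow> bool" where
  "infinitely_divisible_hms b \<longleftrightarrow>
     hausdorff_moment_seq b \<and> (\<forall>\<alpha>>0. hausdorff_moment_seq (\<lambda>n. b n powr \<alpha>))"

end

theory Submission
  imports Defs "HOL-Probability.Probability"
begin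

text \<open>
  Hausdorff moment sequences form a convex cone that is closed under pointwise products
  (image of a product measure under \<open>(s, t) \<mapsto> s t\<close>) and under pointwise limits
  (Helly's selection theorem). If \<open>\<nu>\<close> lives on \<open>[0, q]\<close> with \<open>q < 1\<close>, put
  \<open>w t = 1 / (1 - t)\<close> and \<open>C = \<integral> w d\<nu>\<close>; summing the geometric series under the integral gives
  \<open>a\<^sub>0 + \<dots> + a\<^sub>n = C (1 - T\<^sub>n)\<close>, where \<open>T\<^sub>n\<close> are the moments of \<open>t w t d\<nu> / C\<close> and
  \<open>T\<^sub>0 < 1\<close> because \<open>C (1 - T\<^sub>0) = \<nu> [0, 1] > 0\<close>. The binomial series
  \<open>(1 - T) powr (-\<alpha>) = \<Sum>\<^sub>k (\<alpha>)\<^sub>k / k! T\<^sup>k\<close> has nonnegative coefficients, so it exhibits the \<open>-\<alpha>\<close>-th power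
  of the partial sums as a limit of moment sequences. A general \<open>\<nu>\<close> is handled by pushing it
  forward under \<open>t \<mapsto> min t q\<close> and letting \<open>q \<rightarrow> 1\<close>.
\<close>

lemma measure_on_unit_interval_finite_measure:
  "measure_on_unit_interval M \<Longrightarrow> finite_measure M"
  unfolding measure_on_unit_interval_def by simp

lemma space_measure_on_unit_interval:
  "measure_on_unit_interval M \<Longrightarrow> space M = {0..1}"
  unfolding measure_on_unit_interval_def
  by (metis sets_eq_imp_space_eq space_restrict_space space_borel inf_top_right)

lemma borel_measurable_measure_on_unit_interval:
  assumes "measure_on_unit_interval M" "f \<in> borel_measurable borel"
  shows "f \<in> borel_measurable M"
  using measurable_restrict_space1[OF assms(2), of "{0..1}"] assms(1)
  unfolding measure_on_unit_interval_def by (simp cong: measurable_cong_sets)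

lemma integrable_measure_on_unit_interval:
  fixes f :: "real \<Rightarrow> real"
  assumes "measure_on_unit_interval M" "f \<in> borel_measurable borel"
    and "\<And>t. t \<in> {0..1} \<Longrightarrow> \<bar>f t\<bar> \<le> B"
  shows "integrable M f"
proof -
  interpret finite_measure M
    using assms(1) by (rule measure_on_unit_interval_finite_measure)
  show ?thesis
    using assms space_measure_on_unit_interval borel_measurable_measure_on_unit_interval
    by (intro integrable_const_bound[where B=B]) auto
qed

lemma moment_nonneg: "measure_on_unit_interval M \<Longrightarrow> 0 \<le> moment M n"
  unfolding moment_def by (intro integral_nonneg_AE AE_I2) (simp add: space_measure_on_unit_interval)

lemma moment_le_moment_0:
  assumes "measure_on_unit_interval M"
  shows "moment M n \<le> moment M 0"
  unfolding moment_def using assms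
  by (intro integral_mono integrable_measure_on_unit_interval[where B=1])
     (auto simp: space_measure_on_unit_interval power_le_one abs_le_iff)

lemma moment_0_pos:
  assumes "measure_on_unit_interval M" "emeasure M {0..1} \<noteq> 0"
  shows "0 < moment M 0"
proof -
  interpret finite_measure M
    using assms(1) by (rule measure_on_unit_interval_finite_measure)
  show ?thesis
    using assms by (simp add: moment_def space_measure_on_unit_interval emeasure_eq_measure
        zero_less_measure_iff)
qed

lemma hausdorff_moment_seq_integral_power:
  assumes "finite_measure P" "f \<in> borel_measurable P" "\<And>x. x \<in> space P \<Longrightarrow> f x \<in> {0..1}"
  shows "hausdorff_moment_seq (\<lambda>n. \<integral>x. f x ^ n \<partial>P)"
proof -
  let ?UI = "restrict_space borel {0..1::real}"
  have f: "f \<in> measurable P ?UI"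
    using assms(2,3) by (intro measurable_restrict_space2) auto
  have "measure_on_unit_interval (distr P ?UI f)"
    unfolding measure_on_unit_interval_def
    using finite_measure.finite_measure_distr[OF assms(1) f] by simp
  moreover have "(\<integral>x. f x ^ n \<partial>P) = moment (distr P ?UI f) n" for n
    unfolding moment_def
    by (rule integral_distr[symmetric, OF f]) (auto intro: measurable_restrict_space1)
  ultimately show ?thesis
    unfolding hausdorff_moment_seq_def by blast
qed

lemma hausdorff_moment_seq_weighted_integral_power:
  fixes g h :: "real \<Rightarrow> real"
  assumes \<nu>: "measure_on_unit_interval \<nu>"
    and measurable: "g \<in> borel_measurable borel" "h \<in> borel_measurable borel"
    and g: "\<And>t. t \<in> {0..1} \<Longrightarrow> g t \<in> {0..1}"
    and h: "\<And>t. t \<in> {0..1} \<Longrightarrow> 0 \<le> h t \<and> h t \<le> B"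
  shows "hausdorff_moment_seq (\<lambda>n. \<integral>t. h t * g t ^ n \<partial>\<nu>)"
proof -
  interpret finite_measure \<nu>
    using \<nu> by (rule measure_on_unit_interval_finite_measure)
  have space: "space \<nu> = {0..1}"
    using \<nu> by (rule space_measure_on_unit_interval)
  have g_meas: "g \<in> borel_measurable \<nu>" and h_meas: "h \<in> borel_measurable \<nu>"
    using measurable \<nu> by (simp_all add: borel_measurable_measure_on_unit_interval)
  let ?D = "density \<nu> (\<lambda>t. ennreal (h t))"
  have "emeasure ?D (space ?D) = (\<integral>\<^sup>+t. ennreal (h t) \<partial>\<nu>)"
    using h_meas by (subst emeasure_density) auto
  also have "\<dots> = ennreal (\<integral>t. h t \<partial>\<nu>)"
    using h space
    by (intro nn_integral_eq_integral integrable_measure_on_unit_interval[OF \<nu> measurable(2), where B=B])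
       auto
  finally have "finite_measure ?D"
    by (intro finite_measureI) simp
  then have "hausdorff_moment_seq (\<lambda>n. \<integral>t. g t ^ n \<partial>?D)"
    using g_meas g space by (intro hausdorff_moment_seq_integral_power) simp_all
  moreover have "(\<integral>t. g t ^ n \<partial>?D) = (\<integral>t. h t * g t ^ n \<partial>\<nu>)" for n
    using g_meas h_meas h space by (subst integral_density) auto
  ultimately show ?thesis
    by simp
qed

lemma hausdorff_moment_seq_bounds:
  assumes "hausdorff_moment_seq b"
  shows "0 \<le> b n" "b n \<le> b 0"
  using assms moment_nonneg moment_le_moment_0 unfolding hausdorff_moment_seq_def by metis+

lemma hausdorff_moment_seq_one: "hausdorff_moment_seq (\<lambda>n. 1)"
  using hausdorff_moment_seq_integral_power[of "return borel (0::real)" "\<lambda>_. 1"]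
  by (simp add: prob_space_return[THEN prob_space.finite_measure] measure_return)

lemma hausdorff_moment_seq_scale:
  assumes "hausdorff_moment_seq b" "0 \<le> c"
  shows "hausdorff_moment_seq (\<lambda>n. c * b n)"
proof -
  obtain M where M: "measure_on_unit_interval M" "\<And>n. b n = moment M n"
    using assms(1) unfolding hausdorff_moment_seq_def by blast
  have "hausdorff_moment_seq (\<lambda>n. \<integral>t. c * t ^ n \<partial>M)"
    using assms(2) by (intro hausdorff_moment_seq_weighted_integral_power[OF M(1), where B=c]) auto
  then show ?thesis
    using M(2) by (simp add: moment_def)
qed

lemma hausdorff_moment_seq_zero: "hausdorff_moment_seq (\<lambda>n. 0)"
  using hausdorff_moment_seq_scale[OF hausdorff_moment_seq_one, of 0] by simp

definition add_measure :: "'a measure \<Rightarrow> 'a measure \<Rightarrow> 'a measure" where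
  "add_measure M N = measure_of (space M) (sets M) (\<lambda>A. emeasure M A + emeasure N A)"

lemma space_add_measure [simp]: "space (add_measure M N) = space M"
  by (simp add: add_measure_def)

lemma sets_add_measure [simp, measurable_cong]: "sets (add_measure M N) = sets M"
  by (simp add: add_measure_def)

lemma emeasure_add_measure:
  assumes "sets N = sets M" "A \<in> sets M"
  shows "emeasure (add_measure M N) A = emeasure M A + emeasure N A"
  unfolding add_measure_def
proof (rule emeasure_measure_of_sigma[OF sets.sigma_algebra_axioms _ _ assms(2)])
  show "positive (sets M) (\<lambda>A. emeasure M A + emeasure N A)"
    by (simp add: positive_def)
  show "countably_additive (sets M) (\<lambda>A. emeasure M A + emeasure N A)"
  proof (rule countably_additiveI)
    fix F :: "nat \<Rightarrow> 'a set"
    assume F: "range F \<subseteq> sets M" "disjoint_family F"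
    have "(\<Sum>i. emeasure M (F i) + emeasure N (F i)) = (\<Sum>i. emeasure M (F i)) + (\<Sum>i. emeasure N (F i))"
      by (rule suminf_add[symmetric]) auto
    also have "\<dots> = emeasure M (\<Union>i. F i) + emeasure N (\<Union>i. F i)"
      using F assms(1) by (simp add: suminf_emeasure)
    finally show "(\<Sum>i. emeasure M (F i) + emeasure N (F i)) = emeasure M (\<Union>i. F i) + emeasure N (\<Union>i. F i)" .
  qed
qed

lemma nn_integral_add_measure:
  assumes sets: "sets N = sets M" and f: "f \<in> borel_measurable M"
  shows "(\<integral>\<^sup>+x. f x \<partial>add_measure M N) = (\<integral>\<^sup>+x. f x \<partial>M) + (\<integral>\<^sup>+x. f x \<partial>N)"
  using f
proof (induction rule: borel_measurable_induct)
  case (cong f g)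
  have "space N = space M"
    using sets by (rule sets_eq_imp_space_eq)
  with cong show ?case
    by (metis nn_integral_cong space_add_measure)
next
  case (set A)
  then show ?case
    using sets by (simp add: emeasure_add_measure)
next
  case (mult f c)
  then show ?case
    using sets by (simp add: nn_integral_cmult distrib_left cong: measurable_cong_sets)
next
  case (add f g)
  then show ?case
    using sets by (simp add: nn_integral_add algebra_simps cong: measurable_cong_sets)
next
  case (seq U)
  have U: "U i \<in> borel_measurable (add_measure M N)" "U i \<in> borel_measurable N" for i
    using seq(1) sets by (auto cong: measurable_cong_sets)
  have inc: "incseq (\<lambda>i. integral\<^sup>N L (U i))" for L
    using seq(3) by (auto simp: incseq_def intro!: nn_integral_mono dest: le_funD)
  have "(SUP i. integral\<^sup>N M (U i) + integral\<^sup>N N (U i))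
      = (SUP i. integral\<^sup>N M (U i)) + (SUP i. integral\<^sup>N N (U i))"
    by (rule ennreal_SUP_add[OF inc inc])
  with seq U show ?case
    by (simp add: image_comp nn_integral_monotone_convergence_SUP)
qed

lemma integral_add_measure:
  fixes f :: "'a \<Rightarrow> real"
  assumes sets: "sets N = sets M" and f: "integrable M f" "integrable N f"
    and nonneg: "\<And>x. x \<in> space M \<Longrightarrow> 0 \<le> f x"
  shows "(\<integral>x. f x \<partial>add_measure M N) = (\<integral>x. f x \<partial>M) + (\<integral>x. f x \<partial>N)"
proof -
  have nonneg_N: "0 \<le> f x" if "x \<in> space N" for x
    using nonneg that sets_eq_imp_space_eq[OF sets] by simp
  have "(\<integral>x. f x \<partial>add_measure M N) = enn2real (\<integral>\<^sup>+x. ennreal (f x) \<partial>add_measure M N)"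
    using f(1) nonneg by (intro integral_eq_nn_integral AE_I2) (auto cong: measurable_cong_sets)
  also have "\<dots> = enn2real ((\<integral>\<^sup>+x. ennreal (f x) \<partial>M) + (\<integral>\<^sup>+x. ennreal (f x) \<partial>N))"
    using sets f(1) by (simp add: nn_integral_add_measure)
  also have "\<dots> = enn2real (ennreal (\<integral>x. f x \<partial>M) + ennreal (\<integral>x. f x \<partial>N))"
    using nonneg nonneg_N by (subst (1 2) nn_integral_eq_integral) (auto intro: f)
  also have "\<dots> = (\<integral>x. f x \<partial>M) + (\<integral>x. f x \<partial>N)"
    using nonneg nonneg_N by (simp add: enn2real_plus integral_nonneg)
  finally show ?thesis .
qed

lemma hausdorff_moment_seq_add:
  assumes "hausdorff_moment_seq b" "hausdorff_moment_seq c"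
  shows "hausdorff_moment_seq (\<lambda>n. b n + c n)"
proof -
  obtain M N where M: "measure_on_unit_interval M" "\<And>n. b n = moment M n"
    and N: "measure_on_unit_interval N" "\<And>n. c n = moment N n"
    using assms unfolding hausdorff_moment_seq_def by metis
  interpret M: finite_measure M
    using M(1) by (rule measure_on_unit_interval_finite_measure)
  interpret N: finite_measure N
    using N(1) by (rule measure_on_unit_interval_finite_measure)
  have sets: "sets N = sets M"
    using M(1) N(1) unfolding measure_on_unit_interval_def by simp
  let ?S = "add_measure M N"
  have "emeasure ?S (space ?S) = emeasure M (space M) + emeasure N (space N)"
    using sets sets_eq_imp_space_eq[OF sets] by (simp add: emeasure_add_measure)
  then have "finite_measure ?S"
    by (intro finite_measureI) simp
  then have "hausdorff_moment_seq (\<lambda>n. \<integral>x. x ^ n \<partial>?S)"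
    using borel_measurable_measure_on_unit_interval[OF M(1), of "\<lambda>x. x"]
    by (intro hausdorff_moment_seq_integral_power) (auto simp: space_measure_on_unit_interval[OF M(1)])
  moreover have "(\<integral>x. x ^ n \<partial>?S) = b n + c n" for n
    using M N sets
    by (subst integral_add_measure)
       (auto simp: moment_def space_measure_on_unit_interval power_le_one
         intro!: integrable_measure_on_unit_interval[where B=1])
  ultimately show ?thesis
    by simp
qed

lemma hausdorff_moment_seq_mult:
  assumes "hausdorff_moment_seq b" "hausdorff_moment_seq c"
  shows "hausdorff_moment_seq (\<lambda>n. b n * c n)"
proof -
  obtain M N where M: "measure_on_unit_interval M" "\<And>n. b n = moment M n"
    and N: "measure_on_unit_interval N" "\<And>n. c n = moment N n"
    using assms unfolding hausdorff_moment_seq_def by metis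
  interpret M: finite_measure M
    using M(1) by (rule measure_on_unit_interval_finite_measure)
  interpret N: finite_measure N
    using N(1) by (rule measure_on_unit_interval_finite_measure)
  interpret MN: pair_sigma_finite M N ..
  interpret P: finite_measure "M \<Otimes>\<^sub>M N"
    by (rule finite_measure_pair_measure) unfold_locales
  have space: "space (M \<Otimes>\<^sub>M N) = {0..1} \<times> {0..1}"
    using M(1) N(1) by (simp add: space_pair_measure space_measure_on_unit_interval)
  have "(\<lambda>x. x) \<in> borel_measurable M" "(\<lambda>x. x) \<in> borel_measurable N"
    using M(1) N(1) borel_measurable_measure_on_unit_interval[where f="\<lambda>x. x"] by auto
  then have prod: "(\<lambda>(s, t). s * t) \<in> borel_measurable (M \<Otimes>\<^sub>M N)"
    by measurable
  have "hausdorff_moment_seq (\<lambda>n. \<integral>x. (\<lambda>(s, t). s * t) x ^ n \<partial>(M \<Otimes>\<^sub>M N))"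
    using prod space P.finite_measure_axioms
    by (intro hausdorff_moment_seq_integral_power) (auto simp: mult_le_one)
  moreover have "(\<integral>x. (\<lambda>(s, t). s * t) x ^ n \<partial>(M \<Otimes>\<^sub>M N)) = b n * c n" for n
  proof -
    have "integrable (M \<Otimes>\<^sub>M N) (\<lambda>(s, t). s ^ n * t ^ n)"
      using prod space
      by (intro P.integrable_const_bound[where B=1])
         (auto simp: power_mult_distrib[symmetric] power_le_one mult_le_one case_prod_beta)
    then have "(\<integral>x. (\<lambda>(s, t). s ^ n * t ^ n) x \<partial>(M \<Otimes>\<^sub>M N)) = (\<integral>s. (\<integral>t. s ^ n * t ^ n \<partial>N) \<partial>M)"
      by (rule MN.integral_fst[symmetric])
    then show ?thesis
      using M(2) N(2) by (simp add: case_prod_beta power_mult_distrib moment_def)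
  qed
  ultimately show ?thesis
    by simp
qed

lemma hausdorff_moment_seq_power:
  assumes "hausdorff_moment_seq b"
  shows "hausdorff_moment_seq (\<lambda>n. b n ^ k)"
  by (induction k) (simp_all add: hausdorff_moment_seq_one hausdorff_moment_seq_mult[OF assms])

lemma hausdorff_moment_seq_sum:
  assumes "\<And>k. k \<in> A \<Longrightarrow> hausdorff_moment_seq (f k)"
  shows "hausdorff_moment_seq (\<lambda>n. \<Sum>k\<in>A. f k n)"
  using assms
  by (induction A rule: infinite_finite_induct)
     (simp_all add: hausdorff_moment_seq_zero hausdorff_moment_seq_add)

lemma hausdorff_moment_seq_imp_real_distribution:
  assumes "hausdorff_moment_seq c" "0 < c 0"
  shows "\<exists>\<mu>. real_distribution \<mu> \<and> measure \<mu> {0..1} = 1 \<and> (\<forall>n. (\<integral>x. x ^ n \<partial>\<mu>) = c n / c 0)"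
proof -
  obtain M where M: "measure_on_unit_interval M" "\<And>n. c n = moment M n"
    using assms(1) unfolding hausdorff_moment_seq_def by blast
  interpret finite_measure M
    using M(1) by (rule measure_on_unit_interval_finite_measure)
  have space: "space M = {0..1}"
    using M(1) by (rule space_measure_on_unit_interval)
  have id: "(\<lambda>x. x) \<in> borel_measurable M"
    using borel_measurable_measure_on_unit_interval[OF M(1), of "\<lambda>x. x"] by simp
  let ?D = "density M (\<lambda>_. ennreal (1 / c 0))"
  have "emeasure ?D (space ?D) = ennreal (1 / c 0) * emeasure M (space M)"
    by (simp add: emeasure_density nn_integral_cmult)
  also have "emeasure M (space M) = ennreal (c 0)"
    using M(2)[of 0] by (simp add: emeasure_eq_measure moment_def)
  also have "ennreal (1 / c 0) * ennreal (c 0) = 1"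
    using assms(2) by (subst ennreal_mult[symmetric]) auto
  finally have D: "prob_space ?D"
    by (rule prob_spaceI)
  let ?\<mu> = "distr ?D borel (\<lambda>x. x)"
  have "real_distribution ?\<mu>"
    using D id by (intro prob_space.real_distribution_distr) simp_all
  moreover have "measure ?\<mu> {0..1} = 1"
    using prob_space.prob_space[OF D] id space by (simp add: measure_distr)
  moreover have "(\<integral>x. x ^ n \<partial>?\<mu>) = c n / c 0" for n
    using id assms(2) M(2)[of n] borel_measurable_measure_on_unit_interval[OF M(1), of "\<lambda>x. x ^ n"]
    by (simp add: integral_distr integral_density moment_def)
  ultimately show ?thesis
    by blast
qed

lemma hausdorff_moment_seq_limit_of_distributions:
  assumes distr: "\<And>j. real_distribution (\<mu> j)" "\<And>j. measure (\<mu> j) {0..1} = 1"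
    and lim: "\<And>n. (\<lambda>j. \<integral>x. x ^ n \<partial>\<mu> j) \<longlonglongrightarrow> b n"
  shows "hausdorff_moment_seq b"
proof -
  have tight: "tight \<mu>"
    unfolding tight_def
  proof (intro conjI allI impI)
    show "real_distribution (\<mu> j)" for j
      by (rule distr)
    fix e :: real
    assume "0 < e"
    have "1 - e < measure (\<mu> j) {-1<..1}" for j
    proof -
      interpret real_distribution "\<mu> j"
        by (rule distr)
      have "measure (\<mu> j) {0..1} \<le> measure (\<mu> j) {-1<..1}"
        by (intro finite_measure_mono) auto
      with \<open>0 < e\<close> show ?thesis
        using distr(2)[of j] by simp
    qed
    then show "\<exists>a b::real. a < b \<and> (\<forall>j. 1 - e < measure (\<mu> j) {a<..b})"
      by (intro exI[of _ "-1"] exI[of _ 1]) auto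
  qed
  obtain r P where r: "strict_mono r" and P: "real_distribution P"
    and conv: "weak_conv_m (\<mu> \<circ> r) P"
    using tight_imp_convergent_subsubsequence[OF tight strict_mono_id] by auto
  interpret P: real_distribution P
    by (rule P)
  \<comment> \<open>Weak convergence only controls bounded continuous test functions; on \<open>[0, 1]\<close>,
    which carries all \<open>\<mu> j\<close>, the powers of \<open>clamp\<close> agree with the monomials.\<close>
  define clamp where "clamp x = max 0 (min 1 x)" for x :: real
  have clamp: "clamp x \<in> {0..1}" "isCont (\<lambda>x. clamp x ^ n) x" for x n
    unfolding clamp_def by (auto, intro continuous_intros)
  have "b = (\<lambda>n. \<integral>x. clamp x ^ n \<partial>P)"
  proof (rule ext, rule LIMSEQ_unique)
    fix n
    have "(\<lambda>j. \<integral>x. clamp x ^ n \<partial>\<mu> (r j)) \<longlonglongrightarrow> (\<integral>x. clamp x ^ n \<partial>P)"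
      using weak_conv_imp_integral_bdd_continuous_conv[OF _ P conv, of "\<lambda>x. clamp x ^ n" 1] distr(1)
        clamp by (simp add: power_le_one)
    moreover have "(\<integral>x. clamp x ^ n \<partial>\<mu> j) = (\<integral>x. x ^ n \<partial>\<mu> j)" for j
    proof -
      interpret real_distribution "\<mu> j"
        by (rule distr)
      have "AE x in \<mu> j. clamp x ^ n = x ^ n"
        using AE_prob_1[OF distr(2)] by eventually_elim (auto simp: clamp_def)
      then show ?thesis
        by (rule integral_cong_AE[rotated 2]) (simp_all add: clamp_def)
    qed
    ultimately show "(\<lambda>j. \<integral>x. x ^ n \<partial>\<mu> (r j)) \<longlonglongrightarrow> (\<integral>x. clamp x ^ n \<partial>P)"
      by simp
    show "(\<lambda>j. \<integral>x. x ^ n \<partial>\<mu> (r j)) \<longlonglongrightarrow> b n"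
      using LIMSEQ_subseq_LIMSEQ[OF lim r] by (simp add: o_def)
  qed
  moreover have "hausdorff_moment_seq (\<lambda>n. \<integral>x. clamp x ^ n \<partial>P)"
    using P.finite_measure_axioms clamp
    by (intro hausdorff_moment_seq_integral_power) (auto simp: clamp_def)
  ultimately show ?thesis
    by simp
qed

lemma hausdorff_moment_seq_limit:
  assumes hms: "\<And>j. hausdorff_moment_seq (c j)" and lim: "\<And>n. (\<lambda>j. c j n) \<longlonglongrightarrow> b n"
  shows "hausdorff_moment_seq b"
proof -
  have b_nonneg: "0 \<le> b n" and b_le: "b n \<le> b 0" for n
    using hausdorff_moment_seq_bounds[OF hms]
    by (auto intro!: LIMSEQ_le_const[OF lim] LIMSEQ_le[OF lim lim])
  show ?thesis
  proof (cases "b 0 = 0")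
    case True
    then have "b = (\<lambda>n. 0)"
      using b_nonneg b_le by (auto intro: antisym)
    then show ?thesis
      by (simp add: hausdorff_moment_seq_zero)
  next
    case False
    with b_nonneg have "0 < b 0"
      by (simp add: order_less_le)
    then obtain J where J: "\<And>j. J \<le> j \<Longrightarrow> 0 < c j 0"
      using order_tendstoD(1)[OF lim \<open>0 < b 0\<close>] by (auto simp: eventually_sequentially)
    then have "\<exists>\<mu>. real_distribution \<mu> \<and> measure \<mu> {0..1} = 1 \<and>
        (\<forall>n. (\<integral>x. x ^ n \<partial>\<mu>) = c (j + J) n / c (j + J) 0)" for j
      by (intro hausdorff_moment_seq_imp_real_distribution hms) simp
    then obtain \<mu> where \<mu>: "\<And>j. real_distribution (\<mu> j)" "\<And>j. measure (\<mu> j) {0..1} = 1"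
      "\<And>j n. (\<integral>x. x ^ n \<partial>\<mu> j) = c (j + J) n / c (j + J) 0"
      by metis
    have "(\<lambda>j. c (j + J) n / c (j + J) 0) \<longlonglongrightarrow> b n / b 0" for n
      using \<open>0 < b 0\<close> LIMSEQ_ignore_initial_segment[OF lim]
      by (intro tendsto_divide) auto
    then have "hausdorff_moment_seq (\<lambda>n. b n / b 0)"
      using \<mu> by (intro hausdorff_moment_seq_limit_of_distributions[of \<mu>]) simp_all
    from hausdorff_moment_seq_scale[OF this, of "b 0"] show ?thesis
      using \<open>0 < b 0\<close> by simp
  qed
qed

lemma hausdorff_moment_seq_one_minus_powr:
  assumes hms: "hausdorff_moment_seq b" and "b 0 < 1" "0 < \<alpha>"
  shows "hausdorff_moment_seq (\<lambda>n. (1 - b n) powr (-\<alpha>))"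
proof (rule hausdorff_moment_seq_limit)
  define a where "a k = pochhammer \<alpha> k / fact k" for k
  show "hausdorff_moment_seq (\<lambda>n. \<Sum>k<N. a k * b n ^ k)" for N
    using \<open>0 < \<alpha>\<close> unfolding a_def
    by (intro hausdorff_moment_seq_sum hausdorff_moment_seq_scale hausdorff_moment_seq_power hms
        divide_nonneg_nonneg pochhammer_nonneg) auto
  show "(\<lambda>N. \<Sum>k<N. a k * b n ^ k) \<longlonglongrightarrow> (1 - b n) powr (-\<alpha>)" for n
  proof -
    have "\<bar>- b n\<bar> < 1"
      using hausdorff_moment_seq_bounds[OF hms, of n] \<open>b 0 < 1\<close> by simp
    then have "(\<lambda>k. ((-\<alpha>) gchoose k) * (- b n) ^ k) sums (1 + - b n) powr (-\<alpha>)"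
      by (rule gen_binomial_real)
    moreover have "((-\<alpha>) gchoose k) * (- b n) ^ k = a k * b n ^ k" for k
      unfolding a_def gbinomial_pochhammer power_minus[of "b n"]
      by (simp add: power_mult_distrib[symmetric])
    ultimately show ?thesis
      by (simp add: sums_def)
  qed
qed

lemma sum_integral_power_eq:
  fixes g :: "real \<Rightarrow> real"
  assumes \<nu>: "measure_on_unit_interval \<nu>" and g_meas: "g \<in> borel_measurable borel"
    and g: "\<And>t. t \<in> {0..1} \<Longrightarrow> 0 \<le> g t \<and> g t \<le> q" and "q < 1"
  shows "(\<Sum>k\<le>n. \<integral>t. g t ^ k \<partial>\<nu>)
    = (\<integral>t. 1 / (1 - g t) \<partial>\<nu>) - (\<integral>t. g t ^ Suc n / (1 - g t) \<partial>\<nu>)"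
proof -
  have space: "space \<nu> = {0..1}"
    using \<nu> by (rule space_measure_on_unit_interval)
  have bounded: "\<bar>g t ^ k / (1 - g t)\<bar> \<le> 1 / (1 - q)" if "t \<in> {0..1}" for t k
    using g[OF that] \<open>q < 1\<close> by (auto simp: power_le_one intro!: frac_le)
  have integrable: "integrable \<nu> (\<lambda>t. g t ^ k / (1 - g t))" for k
    using g_meas bounded
    by (intro integrable_measure_on_unit_interval[OF \<nu>, where B="1 / (1 - q)"]) auto
  have "(\<Sum>k\<le>n. \<integral>t. g t ^ k \<partial>\<nu>) = (\<integral>t. (\<Sum>k\<le>n. g t ^ k) \<partial>\<nu>)"
    using g_meas g \<open>q < 1\<close>
    by (intro Bochner_Integration.integral_sum[symmetric]
        integrable_measure_on_unit_interval[OF \<nu>, where B=1])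
       (fastforce intro: power_le_one)+
  also have "\<dots> = (\<integral>t. 1 / (1 - g t) - g t ^ Suc n / (1 - g t) \<partial>\<nu>)"
  proof (intro Bochner_Integration.integral_cong refl)
    fix t
    assume "t \<in> space \<nu>"
    then have "g t \<noteq> 1"
      using g \<open>q < 1\<close> space by fastforce
    then show "(\<Sum>k\<le>n. g t ^ k) = 1 / (1 - g t) - g t ^ Suc n / (1 - g t)"
      by (simp add: sum_gp0 diff_divide_distrib)
  qed
  also have "\<dots> = (\<integral>t. 1 / (1 - g t) \<partial>\<nu>) - (\<integral>t. g t ^ Suc n / (1 - g t) \<partial>\<nu>)"
    using integrable[of 0] integrable[of "Suc n"] by simp
  finally show ?thesis .
qed

lemma hausdorff_moment_seq_partial_sums_powr:
  fixes g :: "real \<Rightarrow> real"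
  assumes \<nu>: "measure_on_unit_interval \<nu>" "emeasure \<nu> {0..1} \<noteq> 0"
    and g_meas: "g \<in> borel_measurable borel"
    and g: "\<And>t. t \<in> {0..1} \<Longrightarrow> 0 \<le> g t \<and> g t \<le> q" and "q < 1" and "0 < \<alpha>"
  shows "hausdorff_moment_seq (\<lambda>n. (\<Sum>k\<le>n. \<integral>t. g t ^ k \<partial>\<nu>) powr (-\<alpha>))"
proof -
  define C where "C = (\<integral>t. 1 / (1 - g t) \<partial>\<nu>)"
  define V where "V n = (\<integral>t. g t ^ Suc n / (1 - g t) \<partial>\<nu>)" for n
  have partial_sums: "(\<Sum>k\<le>n. \<integral>t. g t ^ k \<partial>\<nu>) = C - V n" for n
    unfolding C_def V_def using \<nu>(1) g_meas g \<open>q < 1\<close> by (rule sum_integral_power_eq)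
  have h: "0 \<le> g t / (1 - g t)" "g t / (1 - g t) \<le> 1 / (1 - q)" if "t \<in> {0..1}" for t
    using g[OF that] \<open>q < 1\<close> by (auto intro!: frac_le)
  have "0 < C - V 0"
    using partial_sums[of 0] moment_0_pos[OF \<nu>] by (simp add: moment_def)
  moreover have "0 \<le> V 0"
    unfolding V_def using h space_measure_on_unit_interval[OF \<nu>(1)]
    by (intro integral_nonneg_AE AE_I2) simp
  ultimately have "0 < C"
    by simp
  have "hausdorff_moment_seq (\<lambda>n. \<integral>t. (g t / (1 - g t) / C) * g t ^ n \<partial>\<nu>)"
  proof (rule hausdorff_moment_seq_weighted_integral_power[OF \<nu>(1) g_meas, where B="1 / (1 - q) / C"])
    show "(\<lambda>t. g t / (1 - g t) / C) \<in> borel_measurable borel"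
      using g_meas by measurable
    show "g t \<in> {0..1}" if "t \<in> {0..1}" for t
      using g[OF that] \<open>q < 1\<close> by simp
    show "0 \<le> g t / (1 - g t) / C \<and> g t / (1 - g t) / C \<le> 1 / (1 - q) / C" if "t \<in> {0..1}" for t
      using divide_nonneg_pos[OF h(1)[OF that] \<open>0 < C\<close>] divide_right_mono[OF h(2)[OF that], of C]
        \<open>0 < C\<close> by simp
  qed
  then have V: "hausdorff_moment_seq (\<lambda>n. V n / C)"
    unfolding V_def integral_divide_zero[symmetric] by (simp add: mult.commute)
  then have "hausdorff_moment_seq (\<lambda>n. C powr (-\<alpha>) * (1 - V n / C) powr (-\<alpha>))"
    using \<open>0 < C - V 0\<close> \<open>0 < C\<close> \<open>0 < \<alpha>\<close>
    by (intro hausdorff_moment_seq_scale hausdorff_moment_seq_one_minus_powr) (simp_all add: field_simps)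
  moreover have "C powr (-\<alpha>) * (1 - V n / C) powr (-\<alpha>) = (C - V n) powr (-\<alpha>)" for n
  proof -
    have "0 < 1 - V n / C"
      using hausdorff_moment_seq_bounds[OF V, of n] \<open>0 < C - V 0\<close> \<open>0 < C\<close> by (simp add: field_simps)
    then show ?thesis
      using \<open>0 < C\<close> by (simp add: powr_mult[symmetric] right_diff_distrib)
  qed
  ultimately show ?thesis
    by (simp add: partial_sums)
qed

lemma tendsto_integral_min_power:
  assumes \<nu>: "measure_on_unit_interval \<nu>" and q: "\<And>j. 0 \<le> q j" "q \<longlonglongrightarrow> 1"
  shows "(\<lambda>j. \<integral>t. min t (q j) ^ k \<partial>\<nu>) \<longlonglongrightarrow> moment \<nu> k"
  unfolding moment_def
proof (rule integral_dominated_convergence[where w="\<lambda>_. 1"])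
  interpret finite_measure \<nu>
    using \<nu> by (rule measure_on_unit_interval_finite_measure)
  show "integrable \<nu> (\<lambda>_. 1::real)"
    by simp
  show "(\<lambda>t. t ^ k) \<in> borel_measurable \<nu>" "(\<lambda>t. min t (q j) ^ k) \<in> borel_measurable \<nu>" for j
    by (intro borel_measurable_measure_on_unit_interval[OF \<nu>]; measurable)+
  show "AE t in \<nu>. (\<lambda>j. min t (q j) ^ k) \<longlonglongrightarrow> t ^ k"
  proof (rule AE_I2)
    fix t
    assume "t \<in> space \<nu>"
    then have "min t 1 = t"
      using space_measure_on_unit_interval[OF \<nu>] by simp
    then show "(\<lambda>j. min t (q j) ^ k) \<longlonglongrightarrow> t ^ k"
      using tendsto_min[OF tendsto_const q(2), of t] by (metis tendsto_power)
  qed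
  show "AE t in \<nu>. norm (min t (q j) ^ k) \<le> 1" for j
  proof (rule AE_I2)
    fix t
    assume "t \<in> space \<nu>"
    then have "0 \<le> min t (q j)" "min t (q j) \<le> 1"
      using q(1)[of j] space_measure_on_unit_interval[OF \<nu>] by auto
    then show "norm (min t (q j) ^ k) \<le> 1"
      by (simp add: power_le_one)
  qed
qed

lemma infinitely_divisible_hms_inverse:
  assumes "\<And>\<alpha>. 0 < \<alpha> \<Longrightarrow> hausdorff_moment_seq (\<lambda>n. s n powr (-\<alpha>))" and "\<And>n. 0 < s n"
  shows "infinitely_divisible_hms (\<lambda>n. 1 / s n)"
  unfolding infinitely_divisible_hms_def
proof
  have "(\<lambda>n. 1 / s n) = (\<lambda>n. s n powr (-1))"
    using assms(2) by (simp add: fun_eq_iff powr_minus_divide less_imp_le)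
  then show "hausdorff_moment_seq (\<lambda>n. 1 / s n)"
    using assms(1)[of 1] by simp
  have "(1 / s n) powr \<alpha> = s n powr (-\<alpha>)" for n \<alpha>
    using assms(2) by (simp add: powr_divide powr_minus_divide)
  then show "\<forall>\<alpha>>0. hausdorff_moment_seq (\<lambda>n. (1 / s n) powr \<alpha>)"
    using assms(1) by simp
qed

theorem proposition4p2:
  fixes \<nu> :: "real measure"
  assumes "measure_on_unit_interval \<nu>"
    and "emeasure \<nu> {0..1} \<noteq> 0"
  shows "(\<forall>\<alpha>::real. \<alpha> > 0 \<longrightarrow>
           hausdorff_moment_seq (\<lambda>n. (\<Sum>k\<le>n. moment \<nu> k) powr (-\<alpha>)))
       \<and> infinitely_divisible_hms (\<lambda>n. 1 / (\<Sum>k\<le>n. moment \<nu> k))"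
proof -
  define s where "s n = (\<Sum>k\<le>n. moment \<nu> k)" for n
  have s_pos: "0 < s n" for n
    unfolding s_def using moment_0_pos[OF assms] moment_nonneg[OF assms(1)]
    by (simp add: sum.atMost_shift add_pos_nonneg sum_nonneg)
  define q where "q j = real j / real (Suc j)" for j
  have q: "0 \<le> q j" "q j < 1" for j
    unfolding q_def by auto
  have powr: "hausdorff_moment_seq (\<lambda>n. s n powr (-\<alpha>))" if "0 < \<alpha>" for \<alpha>
  proof (rule hausdorff_moment_seq_limit)
    show "hausdorff_moment_seq (\<lambda>n. (\<Sum>k\<le>n. \<integral>t. min t (q j) ^ k \<partial>\<nu>) powr (-\<alpha>))" for j
      using q[of j] \<open>0 < \<alpha>\<close> by (intro hausdorff_moment_seq_partial_sums_powr[OF assms]) auto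
    show "(\<lambda>j. (\<Sum>k\<le>n. \<integral>t. min t (q j) ^ k \<partial>\<nu>) powr (-\<alpha>)) \<longlonglongrightarrow> s n powr (-\<alpha>)" for n
      unfolding s_def using s_pos[of n] q(1) LIMSEQ_n_over_Suc_n
      by (intro tendsto_powr tendsto_sum tendsto_integral_min_power[OF assms(1)])
         (auto simp: s_def q_def)
  qed
  have "infinitely_divisible_hms (\<lambda>n. 1 / s n)"
    using powr s_pos by (rule infinitely_divisible_hms_inverse)
  with powr show ?thesis
    unfolding s_def by blast
qed

end
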